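(* Let $m\ge2$ and $K^*>m$ be integers, set $L=K^*-m+1$, and let $\tau^s>1$. For $r\in[0,1]$ let $$f(r)=\frac{K^*!}{L!\,(m-2)!}\,r^{L}(1-r)^{m-2},$$ for $x\ge0$ and integers $l\ge1$ let $G_l(x)=e^{-x}\sum_{n=0}^{l-1}\frac{x^n}{n!}$, and for $c\ge0$ define $$P_d^s(c)=\int_0^{1/\tau^s}f(r)\,dr+\int_{1/\tau^s}^{1}f(r)\Big[1-\frac{1}{(r\tau^s)^{L}}\sum_{l=1}^{L}\binom{L}{l}(r\tau^s-1)^{l}\,G_l\!\big(c/\tau^s\big)\Big]dr .$$ Then $P_d^s$ is a strictly increasing function of $c$ on $[0,\infty)$.
   Context: In the paper, $P_d^s(c)$ is the detection probability of the adaptive detector $z^T\big(\sum_{k^*=-K^*}^{-1}z(k^* )z(k^* )^T\big)^{-1}z\gtrless\tau^s-1$ built from $K^*$ secondary residual samples, $m$ is the residual dimension, and $c=c_i^p(k)=a_i^T(k-1)\Sigma_{z_i^p}^{-1}a_i(k-1)$ is the non-centrality parameter induced by the attack. *)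

theory Defs
  imports "HOL-Analysis.Analysis"
begin

definition dens :: "nat \<Rightarrow> nat \<Rightarrow> real \<Rightarrow> real" where
  "dens m Ks r = fact Ks / (fact (Ks - m + 1) * fact (m - 2)) * r ^ (Ks - m + 1) * (1 - r) ^ (m - 2)"

definition G :: "nat \<Rightarrow> real \<Rightarrow> real" where
  "G l x = exp (- x) * (\<Sum>n<l. x ^ n / fact n)"

definition Pds :: "nat \<Rightarrow> nat \<Rightarrow> real \<Rightarrow> real \<Rightarrow> real" where
  "Pds m Ks tau c =
     (let L = Ks - m + 1 in
      integral {0..1/tau} (dens m Ks)
      + integral {1/tau..1} (\<lambda>r. dens m Ks r *
          (1 - 1 / (r * tau) ^ L *
               (\<Sum>l=1..L. real (L choose l) * (r * tau - 1) ^ l * G l (c / tau)))))"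

end

theory Submission
  imports Defs
begin

text \<open>For \<open>l \<ge> 1\<close>, \<open>G l x\<close> is the probability that a Poisson(\<open>x\<close>) variable is smaller than \<open>l\<close>;
its derivative is \<open>-e\<^sup>-\<^sup>x x\<^sup>l\<^sup>-\<^sup>1/(l-1)!\<close>, so it strictly decreases on \<open>[0,\<infinity>)\<close>. For
\<open>1/\<tau> < r < 1\<close> the density and the weights \<open>binom L l (r\<tau>-1)\<^sup>l/(r\<tau>)\<^sup>L\<close> are positive, hence the
integrand of the second integral strictly increases with \<open>c\<close>, while the first integral does not
depend on \<open>c\<close> at all.\<close>

lemma exp_partial_sum_has_real_derivative:
  "((\<lambda>x::real. \<Sum>n<Suc k. x ^ n / fact n) has_real_derivative (\<Sum>n<k. x ^ n / fact n)) (at x)"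
proof (induction k)
  case 0
  then show ?case by simp
next
  case (Suc k)
  have "((\<lambda>x::real. x ^ Suc k / fact (Suc k)) has_real_derivative
          real (Suc k) * x ^ k / fact (Suc k)) (at x)"
    by (intro DERIV_cdivide) (use DERIV_pow[of "Suc k" x] in simp)
  also have "real (Suc k) * x ^ k / fact (Suc k) = x ^ k / fact k"
    by (simp add: fact_Suc del: of_nat_Suc)
  finally have "((\<lambda>x::real. x ^ Suc k / fact (Suc k)) has_real_derivative x ^ k / fact k) (at x)" .
  from DERIV_add[OF Suc this] show ?case by simp
qed

lemma G_Suc_has_real_derivative:
  "(G (Suc k) has_real_derivative - exp (- x) * x ^ k / fact k) (at x)"
proof -
  have "((\<lambda>x::real. exp (- x)) has_real_derivative - exp (- x)) (at x)"
    by (auto intro!: derivative_eq_intros)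
  from DERIV_mult[OF this exp_partial_sum_has_real_derivative[of k x]]
  show ?thesis
    unfolding G_def[abs_def] by (simp add: algebra_simps)
qed

lemma continuous_on_G: "continuous_on A (G l)"
  unfolding G_def[abs_def] by (intro continuous_intros) auto

lemma G_strict_antimono:
  assumes "l \<ge> 1" "0 \<le> x" "x < y"
  shows "G l y < G l x"
proof -
  obtain k where l: "l = Suc k"
    using assms(1) by (cases l) auto
  show ?thesis
    unfolding l
  proof (rule DERIV_neg_imp_decreasing_open[OF assms(3)])
    fix t assume "x < t" "t < y"
    with assms have "- exp (- t) * t ^ k / fact k < 0"
      by (simp add: divide_neg_pos)
    then show "\<exists>d. (G (Suc k) has_real_derivative d) (at t) \<and> d < 0"
      using G_Suc_has_real_derivative by blast
  qed (rule continuous_on_G)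
qed

lemma dens_pos: "0 < r \<Longrightarrow> r < 1 \<Longrightarrow> 0 < dens m Ks r"
  unfolding dens_def by simp

lemma continuous_on_dens: "continuous_on A (dens m Ks)"
  unfolding dens_def[abs_def] by (intro continuous_intros)

definition cond_miss :: "nat \<Rightarrow> real \<Rightarrow> real \<Rightarrow> real \<Rightarrow> real" where
  "cond_miss L tau c r =
     1 / (r * tau) ^ L * (\<Sum>l=1..L. real (L choose l) * (r * tau - 1) ^ l * G l (c / tau))"

lemma Pds_eq_cond_miss:
  "Pds m Ks tau c = integral {0..1/tau} (dens m Ks)
     + integral {1/tau..1} (\<lambda>r. dens m Ks r * (1 - cond_miss (Ks - m + 1) tau c r))"
  unfolding Pds_def cond_miss_def Let_def ..

lemma continuous_on_cond_miss:
  assumes "tau \<noteq> 0" "0 \<notin> S"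
  shows "continuous_on S (cond_miss L tau c)"
proof -
  have "(r * tau) ^ L \<noteq> 0" if "r \<in> S" for r
    using assms that by auto
  then show ?thesis
    unfolding cond_miss_def[abs_def]
    by (intro continuous_intros continuous_on_G) auto
qed

lemma cond_miss_strict_antimono:
  assumes "L \<ge> 1" "tau > 0" "r * tau > 1" "0 \<le> c1" "c1 < c2"
  shows "cond_miss L tau c2 r < cond_miss L tau c1 r"
proof -
  have "(\<Sum>l=1..L. real (L choose l) * (r * tau - 1) ^ l * G l (c2 / tau))
      < (\<Sum>l=1..L. real (L choose l) * (r * tau - 1) ^ l * G l (c1 / tau))"
  proof (rule sum_strict_mono)
    fix l assume l: "l \<in> {1..L}"
    then have "G l (c2 / tau) < G l (c1 / tau)"
      using assms by (intro G_strict_antimono) (auto simp: divide_strict_right_mono)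
    moreover have "0 < real (L choose l) * (r * tau - 1) ^ l"
      using l assms(3) by auto
    ultimately show "real (L choose l) * (r * tau - 1) ^ l * G l (c2 / tau)
        < real (L choose l) * (r * tau - 1) ^ l * G l (c1 / tau)"
      by (rule mult_strict_left_mono)
  qed (use assms(1) in auto)
  moreover have "0 < 1 / (r * tau) ^ L"
    using assms(3) by simp
  ultimately show ?thesis
    unfolding cond_miss_def by (rule mult_strict_left_mono)
qed

theorem proposition1:
  fixes m Ks :: nat and tau :: real
  assumes "m \<ge> 2" and "Ks > m" and "tau > 1"
  shows "strict_mono_on {0..} (Pds m Ks tau)"
proof (rule strict_mono_onI)
  fix c1 c2 :: real
  assume "c1 \<in> {0..}" "c2 \<in> {0..}" "c1 < c2"
  let ?g = "\<lambda>c r. dens m Ks r * (1 - cond_miss (Ks - m + 1) tau c r)"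
  have "0 < 1 / tau" "1 / tau < 1"
    using assms(3) by auto
  then have cont: "continuous_on {1/tau..1} (?g c)" for c
    by (intro continuous_intros continuous_on_dens continuous_on_cond_miss) auto
  have "?g c1 r < ?g c2 r" if "r \<in> {1/tau<..<1}" for r
  proof -
    have "0 < r"
      using that \<open>0 < 1 / tau\<close> by (meson greaterThanLessThan_iff less_trans)
    have "1 < r * tau"
      using that assms(3) by (auto simp: divide_less_eq)
    with \<open>0 < r\<close> that \<open>c1 \<in> {0..}\<close> \<open>c1 < c2\<close> assms(3) show ?thesis
      by (intro mult_strict_left_mono dens_pos) (auto intro: cond_miss_strict_antimono)
  qed
  then have "integral {1/tau..1} (?g c1) < integral {1/tau..1} (?g c2)"
    using \<open>1 / tau < 1\<close> by (intro integral_less_real cont) auto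
  then show "Pds m Ks tau c1 < Pds m Ks tau c2"
    unfolding Pds_eq_cond_miss by simp
qed

end
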